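(* Let $G$ be a graph and $Y$ a minimal blocking set of $G$. Then: (i) $Y$ contains no vertex that belongs to every minimum vertex cover of $G$; (ii) if $Y$ contains a vertex that belongs to no minimum vertex cover of $G$, then $|Y|=1$; (iii) $Y$ is contained in a single connected component of $G$; (iv) $\mathrm{OPT}(G-Y)+|Y|=\mathrm{OPT}(G)+1$.
   Context: $\mathrm{OPT}(G)$ is the minimum vertex cover size; a minimum vertex cover is one of size $\mathrm{OPT}(G)$. $Y\subseteq V(G)$ is a blocking set of $G$ if no minimum vertex cover of $G$ contains $Y$; it is minimal if no proper subset of $Y$ is a blocking set. *)

theory Defs
  imports Main
begin

definition graph :: "'a set \<Rightarrow> 'a set set \<Rightarrow> bool" where
  "graph V E \<longleftrightarrow> finite V \<and> (\<forall>e\<in>E. \<exists>u v. e = {u, v} \<and> u \<noteq> v \<and> u \<in> V \<and> v \<in> V)"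

definition vertex_cover :: "'a set \<Rightarrow> 'a set set \<Rightarrow> 'a set \<Rightarrow> bool" where
  "vertex_cover V E C \<longleftrightarrow> C \<subseteq> V \<and> (\<forall>e\<in>E. e \<inter> C \<noteq> {})"

definition OPT :: "'a set \<Rightarrow> 'a set set \<Rightarrow> nat" where
  "OPT V E = Min (card ` {C. vertex_cover V E C})"

definition min_vertex_cover :: "'a set \<Rightarrow> 'a set set \<Rightarrow> 'a set \<Rightarrow> bool" where
  "min_vertex_cover V E C \<longleftrightarrow> vertex_cover V E C \<and> card C = OPT V E"

definition blocking_set :: "'a set \<Rightarrow> 'a set set \<Rightarrow> 'a set \<Rightarrow> bool" where
  "blocking_set V E Y \<longleftrightarrow> Y \<subseteq> V \<and> \<not> (\<exists>C. min_vertex_cover V E C \<and> Y \<subseteq> C)"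

definition minimal_blocking_set :: "'a set \<Rightarrow> 'a set set \<Rightarrow> 'a set \<Rightarrow> bool" where
  "minimal_blocking_set V E Y \<longleftrightarrow> blocking_set V E Y \<and> (\<forall>Y'. Y' \<subset> Y \<longrightarrow> \<not> blocking_set V E Y')"

text \<open>Edge set of G - Y (vertex set is V - Y).\<close>
definition del_edges :: "'a set set \<Rightarrow> 'a set \<Rightarrow> 'a set set" where
  "del_edges E Y = {e \<in> E. e \<inter> Y = {}}"

definition connected_in :: "'a set set \<Rightarrow> 'a \<Rightarrow> 'a \<Rightarrow> bool" where
  "connected_in E u v \<longleftrightarrow> (\<lambda>x y. {x, y} \<in> E)\<^sup>*\<^sup>* u v"

end

theory Submission
  imports Defs
begin

text \<open>
  Minimality means that every proper subset of \<open>Y\<close> lies in some minimum vertex cover.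
  Parts (i) and (ii) are immediate from this. For (iii), if \<open>Y\<close> met two components, take
  minimum covers containing the part of \<open>Y\<close> inside the component \<open>K\<close> of one of its
  vertices and the part outside \<open>K\<close>; since no edge crosses \<open>K\<close>, gluing the first cover
  on \<open>K\<close> with the second off \<open>K\<close> gives a cover, and the complementary gluing shows that
  it is again minimum, yet it contains \<open>Y\<close>. For (iv), a minimum cover of \<open>G - Y\<close>
  together with \<open>Y\<close> covers \<open>G\<close> but cannot be minimum, giving \<open>\<ge>\<close>; conversely a
  minimum cover containing \<open>Y - {y}\<close> (but not \<open>y\<close>) loses exactly \<open>|Y| - 1\<close>
  vertices when \<open>Y\<close> is deleted, giving \<open>\<le>\<close>.
\<close>

lemma graph_del_edges:
  assumes "graph V E"
  shows "graph (V - Y) (del_edges E Y)"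
  unfolding graph_def
proof (intro conjI ballI)
  show "finite (V - Y)" using assms by (simp add: graph_def)
  fix e assume "e \<in> del_edges E Y"
  then have "e \<in> E" and eY: "e \<inter> Y = {}" by (simp_all add: del_edges_def)
  then obtain u v where uv: "e = {u, v}" "u \<noteq> v" "u \<in> V" "v \<in> V"
    using assms unfolding graph_def by blast
  then have "u \<in> V - Y" "v \<in> V - Y" using eY by auto
  with uv show "\<exists>u v. e = {u, v} \<and> u \<noteq> v \<and> u \<in> V - Y \<and> v \<in> V - Y"
    by blast
qed

lemma OPT_le_card:
  assumes "finite V" and "vertex_cover V E C"
  shows "OPT V E \<le> card C"
proof -
  have "finite (card ` {C. vertex_cover V E C})"
    by (rule finite_subset[of _ "card ` Pow V"]) (auto simp: vertex_cover_def assms(1))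
  then show ?thesis
    unfolding OPT_def using assms(2) by (simp add: Min_le)
qed

lemma min_vertex_cover_exists:
  assumes "graph V E"
  obtains C where "min_vertex_cover V E C"
proof -
  have finV: "finite V" using assms by (simp add: graph_def)
  have "vertex_cover V E V"
    using assms unfolding graph_def vertex_cover_def by blast
  then have ne: "card ` {C. vertex_cover V E C} \<noteq> {}" by blast
  have "finite (card ` {C. vertex_cover V E C})"
    by (rule finite_subset[of _ "card ` Pow V"]) (auto simp: vertex_cover_def finV)
  then have "OPT V E \<in> card ` {C. vertex_cover V E C}"
    unfolding OPT_def using ne by (rule Min_in)
  then obtain C where "vertex_cover V E C" and "card C = OPT V E"
    by auto
  then have "min_vertex_cover V E C"
    by (simp add: min_vertex_cover_def)
  then show ?thesis
    by (rule that)
qed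

lemma min_vertex_cover_finite:
  assumes "finite V" and "min_vertex_cover V E C"
  shows "finite C"
  using assms finite_subset unfolding min_vertex_cover_def vertex_cover_def by blast

lemma vertex_cover_del_edges:
  assumes "vertex_cover V E C"
  shows "vertex_cover (V - Y) (del_edges E Y) (C - Y)"
  using assms unfolding vertex_cover_def del_edges_def by blast

lemma vertex_cover_Un_del_edges:
  assumes "Y \<subseteq> V" and "vertex_cover (V - Y) (del_edges E Y) C"
  shows "vertex_cover V E (C \<union> Y)"
  using assms unfolding vertex_cover_def del_edges_def by blast

definition edge_closed :: "'a set set \<Rightarrow> 'a set \<Rightarrow> bool" where
  "edge_closed E K \<longleftrightarrow> (\<forall>e\<in>E. e \<subseteq> K \<or> e \<inter> K = {})"

lemma edge_closed_component:
  assumes "graph V E"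
  shows "edge_closed E {v. connected_in E x v}"
  unfolding edge_closed_def
proof
  fix e assume e: "e \<in> E"
  then obtain u v where uv: "e = {u, v}"
    using assms unfolding graph_def by blast
  have "{v, u} \<in> E" using e uv by (simp add: insert_commute)
  then have "connected_in E x u \<longleftrightarrow> connected_in E x v"
    using e uv unfolding connected_in_def by (auto intro: rtranclp.rtrancl_into_rtrancl)
  then show "e \<subseteq> {v. connected_in E x v} \<or> e \<inter> {v. connected_in E x v} = {}"
    using uv by auto
qed

lemma vertex_cover_glue:
  assumes "edge_closed E K" and "vertex_cover V E C1" and "vertex_cover V E C2"
  shows "vertex_cover V E (C1 \<inter> K \<union> (C2 - K))"
  unfolding vertex_cover_def
proof (intro conjI ballI)
  show "C1 \<inter> K \<union> (C2 - K) \<subseteq> V"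
    using assms by (auto simp: vertex_cover_def)
  fix e assume "e \<in> E"
  then have "e \<inter> C1 \<noteq> {}" "e \<inter> C2 \<noteq> {}" "e \<subseteq> K \<or> e \<inter> K = {}"
    using assms by (auto simp: vertex_cover_def edge_closed_def)
  then show "e \<inter> (C1 \<inter> K \<union> (C2 - K)) \<noteq> {}"
    by blast
qed

lemma min_vertex_cover_glue:
  assumes "finite V" and "edge_closed E K"
    and C1: "min_vertex_cover V E C1" and C2: "min_vertex_cover V E C2"
  shows "min_vertex_cover V E (C1 \<inter> K \<union> (C2 - K))"
proof -
  have fin: "finite C1" "finite C2"
    using assms min_vertex_cover_finite by blast+
  have vc: "vertex_cover V E C1" "vertex_cover V E C2"
    and card: "card C1 = OPT V E" "card C2 = OPT V E"
    using C1 C2 by (auto simp: min_vertex_cover_def)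
  have split: "card C = card (C \<inter> K) + card (C - K)" if "finite C" for C :: "'a set"
    using that by (metis card_Un_disjoint Int_Diff_Un Int_Diff_disjoint finite_Diff finite_Int)
  have glue: "card (A \<inter> K \<union> (B - K)) = card (A \<inter> K) + card (B - K)"
    if "finite A" "finite B" for A B :: "'a set"
    using that by (intro card_Un_disjoint) auto
  \<comment> \<open>Both gluings are covers, and their sizes add up to \<open>2 OPT\<close>.\<close>
  have "OPT V E \<le> card (C1 \<inter> K \<union> (C2 - K))" "OPT V E \<le> card (C2 \<inter> K \<union> (C1 - K))"
    using OPT_le_card[OF \<open>finite V\<close>] vertex_cover_glue[OF \<open>edge_closed E K\<close>] vc by blast+
  then have "card (C1 \<inter> K \<union> (C2 - K)) = OPT V E"
    using split[OF fin(1)] split[OF fin(2)] glue[OF fin] glue[OF fin(2,1)] card by linarith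
  then show ?thesis
    using vertex_cover_glue[OF \<open>edge_closed E K\<close> vc] by (simp add: min_vertex_cover_def)
qed

lemma minimal_blocking_set_subset_cover:
  assumes "minimal_blocking_set V E Y" and "Y' \<subset> Y"
  shows "\<exists>C. min_vertex_cover V E C \<and> Y' \<subseteq> C"
  using assms unfolding minimal_blocking_set_def blocking_set_def by blast

lemma minimal_blocking_set_not_subset_cover:
  assumes "minimal_blocking_set V E Y" and "min_vertex_cover V E C"
  shows "\<not> Y \<subseteq> C"
  using assms unfolding minimal_blocking_set_def blocking_set_def by blast

lemma minimal_blocking_set_nonempty:
  assumes "graph V E" and "minimal_blocking_set V E Y"
  shows "Y \<noteq> {}"
  using min_vertex_cover_exists[OF assms(1)] minimal_blocking_set_not_subset_cover[OF assms(2)] by blast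

lemma minimal_blocking_set_avoids_cover_vertex:
  assumes "minimal_blocking_set V E Y" and "y \<in> Y"
  obtains C where "min_vertex_cover V E C" and "Y - {y} \<subseteq> C" and "y \<notin> C"
proof -
  have "Y - {y} \<subset> Y" using assms(2) by blast
  then obtain C where "min_vertex_cover V E C" "Y - {y} \<subseteq> C"
    using minimal_blocking_set_subset_cover[OF assms(1)] by blast
  then show ?thesis
    using that minimal_blocking_set_not_subset_cover[OF assms(1)] by blast
qed

lemma minimal_blocking_set_no_forced_vertex:
  assumes "minimal_blocking_set V E Y" and "y \<in> Y"
  shows "\<not> (\<forall>C. min_vertex_cover V E C \<longrightarrow> y \<in> C)"
proof
  assume forced: "\<forall>C. min_vertex_cover V E C \<longrightarrow> y \<in> C"
  obtain C where "min_vertex_cover V E C" "Y - {y} \<subseteq> C" "y \<notin> C"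
    by (rule minimal_blocking_set_avoids_cover_vertex[OF assms])
  with forced show False by blast
qed

lemma minimal_blocking_set_singleton:
  assumes "minimal_blocking_set V E Y" and "y \<in> Y"
    and "\<forall>C. min_vertex_cover V E C \<longrightarrow> y \<notin> C"
  shows "Y = {y}"
proof (rule ccontr)
  assume "Y \<noteq> {y}"
  then have "{y} \<subset> Y" using assms(2) by auto
  then show False
    using minimal_blocking_set_subset_cover[OF assms(1)] assms(3) by blast
qed

lemma minimal_blocking_set_within_closed:
  assumes "finite V" and "minimal_blocking_set V E Y"
    and "edge_closed E K" and "Y \<inter> K \<noteq> {}"
  shows "Y \<subseteq> K"
proof (rule ccontr)
  assume "\<not> Y \<subseteq> K"
  then have "Y \<inter> K \<subset> Y" and "Y - K \<subset> Y"
    using assms(4) by blast+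
  then obtain C1 C2 where C1: "min_vertex_cover V E C1" "Y \<inter> K \<subseteq> C1"
    and C2: "min_vertex_cover V E C2" "Y - K \<subseteq> C2"
    using minimal_blocking_set_subset_cover[OF assms(2)] by meson
  have "min_vertex_cover V E (C1 \<inter> K \<union> (C2 - K))"
    using min_vertex_cover_glue[OF assms(1,3) C1(1) C2(1)] .
  moreover have "Y \<subseteq> C1 \<inter> K \<union> (C2 - K)"
    using C1(2) C2(2) by blast
  ultimately show False
    using minimal_blocking_set_not_subset_cover[OF assms(2)] by blast
qed

lemma OPT_del_blocking_set_ge:
  assumes "graph V E" and "blocking_set V E Y"
  shows "OPT V E + 1 \<le> OPT (V - Y) (del_edges E Y) + card Y"
proof -
  have finV: "finite V" using assms(1) by (simp add: graph_def)
  have YV: "Y \<subseteq> V" using assms(2) by (simp add: blocking_set_def)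
  obtain C where C: "min_vertex_cover (V - Y) (del_edges E Y) C"
    using min_vertex_cover_exists[OF graph_del_edges[OF assms(1)]] .
  then have vc: "vertex_cover (V - Y) (del_edges E Y) C"
    and cardC: "card C = OPT (V - Y) (del_edges E Y)"
    by (auto simp: min_vertex_cover_def)
  have cover: "vertex_cover V E (C \<union> Y)"
    using vertex_cover_Un_del_edges[OF YV vc] .
  then have "card (C \<union> Y) \<noteq> OPT V E"
    using assms(2) by (auto simp: blocking_set_def min_vertex_cover_def)
  moreover have "OPT V E \<le> card (C \<union> Y)"
    using OPT_le_card[OF finV cover] .
  moreover have "card (C \<union> Y) = card C + card Y"
    using vc finV YV finite_subset by (intro card_Un_disjoint) (auto simp: vertex_cover_def)
  ultimately show ?thesis
    using cardC by linarith
qed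

lemma OPT_del_minimal_blocking_set_le:
  assumes "graph V E" and "minimal_blocking_set V E Y"
  shows "OPT (V - Y) (del_edges E Y) + card Y \<le> OPT V E + 1"
proof -
  have finV: "finite V" using assms(1) by (simp add: graph_def)
  obtain y where y: "y \<in> Y"
    using minimal_blocking_set_nonempty[OF assms] by blast
  obtain C where C: "min_vertex_cover V E C" "Y - {y} \<subseteq> C" "y \<notin> C"
    using minimal_blocking_set_avoids_cover_vertex[OF assms(2) y] .
  have finC: "finite C" using min_vertex_cover_finite[OF finV C(1)] .
  have "finite Y"
    using assms(2) finV finite_subset by (auto simp: minimal_blocking_set_def blocking_set_def)
  then have "card Y = card (Y - {y}) + 1"
    using card.remove[OF _ y] by simp
  moreover have "C - Y = C - (Y - {y})"
    using C(3) by blast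
  then have "card (C - Y) + card (Y - {y}) = card C"
    using card_Diff_subset[OF finite_subset[OF C(2) finC] C(2)] card_mono[OF finC C(2)] by simp
  moreover have "vertex_cover V E C"
    using C(1) by (simp add: min_vertex_cover_def)
  then have "vertex_cover (V - Y) (del_edges E Y) (C - Y)"
    by (rule vertex_cover_del_edges)
  then have "OPT (V - Y) (del_edges E Y) \<le> card (C - Y)"
    using finV by (simp add: OPT_le_card)
  ultimately show ?thesis
    using C(1) by (simp add: min_vertex_cover_def)
qed

theorem mainTheorem11:
  fixes V :: "'a set" and E :: "'a set set" and Y :: "'a set"
  assumes "graph V E"
    and "minimal_blocking_set V E Y"
  shows "(\<forall>v\<in>Y. \<not> (\<forall>C. min_vertex_cover V E C \<longrightarrow> v \<in> C))
    \<and> ((\<exists>v\<in>Y. \<forall>C. min_vertex_cover V E C \<longrightarrow> v \<notin> C) \<longrightarrow> card Y = 1)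
    \<and> (\<exists>x\<in>V. \<forall>y\<in>Y. connected_in E x y)
    \<and> OPT (V - Y) (del_edges E Y) + card Y = OPT V E + 1"
proof (intro conjI ballI impI)
  show "\<not> (\<forall>C. min_vertex_cover V E C \<longrightarrow> v \<in> C)" if "v \<in> Y" for v
    using minimal_blocking_set_no_forced_vertex[OF assms(2) that] .
  show "card Y = 1" if "\<exists>v\<in>Y. \<forall>C. min_vertex_cover V E C \<longrightarrow> v \<notin> C"
  proof -
    from that obtain v where "v \<in> Y" "\<forall>C. min_vertex_cover V E C \<longrightarrow> v \<notin> C" ..
    then have "Y = {v}" by (rule minimal_blocking_set_singleton[OF assms(2)])
    then show ?thesis by simp
  qed
  have finV: "finite V" and YV: "Y \<subseteq> V"
    using assms by (auto simp: graph_def minimal_blocking_set_def blocking_set_def)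
  obtain x where x: "x \<in> Y"
    using minimal_blocking_set_nonempty[OF assms] by blast
  have "x \<in> {v. connected_in E x v}" by (simp add: connected_in_def)
  then have "Y \<subseteq> {v. connected_in E x v}"
    using minimal_blocking_set_within_closed[OF finV assms(2) edge_closed_component[OF assms(1)]] x
    by blast
  then show "\<exists>x\<in>V. \<forall>y\<in>Y. connected_in E x y"
    using x YV by blast
  show "OPT (V - Y) (del_edges E Y) + card Y = OPT V E + 1"
    using OPT_del_blocking_set_ge[OF assms(1)] OPT_del_minimal_blocking_set_le[OF assms] assms(2)
    unfolding minimal_blocking_set_def by (intro antisym) auto
qed

end
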